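(* Let $n\in\mathbb{N}$, $n\ge1$. Let $H_n=\{0,1\}^n$ with the $\ell_1$ metric $d$, enumerated as $H_n=\{b_{n,i}:i=0,1,\ldots,2^n-1\}$ where $b_{n,i}$ is the $n$-digit binary representation of $i$ (most significant digit first). Let $D_n=[d(b_{n,i},b_{n,j})]_{0\le i,j\le 2^n-1}$ and let $O_n$ be the $2^n\times 2^n$ all-ones matrix. For $0\le j\le i$, let $\mathbb{1}_{i,j}\in\mathbb{R}^{2^i}$ be the vector whose first $2^j$ coordinates equal $1$, the next $2^j$ coordinates equal $-1$, the next $2^j$ equal $1$, and so on alternately. Let $A_n$ be the $(n+1)\times 2^n$ matrix with rows $\mathbb{1}_{n,n}^T,\mathbb{1}_{n,n-1}^T,\ldots,\mathbb{1}_{n,0}^T$. Then: (1) $D_1=\begin{bmatrix}0&1\\1&0\end{bmatrix}$ and $D_{n+1}=\begin{bmatrix}D_n & D_n+O_n\\ D_n+O_n & D_n\end{bmatrix}$. (2) $D_n\mathbb{1}_{n,n}=n2^{n-1}\mathbb{1}_{n,n}$ and $D_n\mathbb{1}_{n,i}=-2^{n-1}\mathbb{1}_{n,i}$ for all $i=0,1,\ldots,n-1$. (3) With $V_n=\operatorname{Span}\{\mathbb{1}_{n,i}:i=0,1,\ldots,n\}$, the column space of $D_n$ equals $V_n$. (4) $N(A_n)=N(D_n)=V_n^\perp$, where $N(\cdot)$ denotes the null space. *)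

theory Defs
  imports "Jordan_Normal_Form.VS_Connect" "Jordan_Normal_Form.Matrix_Kernel"
begin

(* k-th binary digit (k = 0 is the most significant one) of the n-digit
   binary representation b_{n,i} of i *)
definition bdigit :: "nat \<Rightarrow> nat \<Rightarrow> nat \<Rightarrow> nat" where
  "bdigit n i k = (i div 2 ^ (n - 1 - k)) mod 2"

definition hdist :: "nat \<Rightarrow> nat \<Rightarrow> nat \<Rightarrow> real" where
  "hdist n i j = (\<Sum>k<n. \<bar>real (bdigit n i k) - real (bdigit n j k)\<bar>)"

definition Dmat :: "nat \<Rightarrow> real mat" where
  "Dmat n = mat (2 ^ n) (2 ^ n) (\<lambda>(i, j). hdist n i j)"

definition Omat :: "nat \<Rightarrow> real mat" where
  "Omat n = mat (2 ^ n) (2 ^ n) (\<lambda>_. 1)"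

definition altvec :: "nat \<Rightarrow> nat \<Rightarrow> real vec" where
  "altvec i j = vec (2 ^ i) (\<lambda>k. if even (k div 2 ^ j) then 1 else -1)"

definition Amat :: "nat \<Rightarrow> real mat" where
  "Amat n = mat (n + 1) (2 ^ n) (\<lambda>(r, c). altvec n (n - r) $ c)"

definition Vspace :: "nat \<Rightarrow> real vec set" where
  "Vspace n = LinearCombinations.module.span class_ring (module_vec TYPE(real) (2 ^ n)) ((\<lambda>i. altvec n i) ` {0..n})"

end

theory Submission
  imports Defs
begin

text \<open>Let s_p(k) = \<plusminus>1 be the sign of the p-th binary digit of k, counted from the least
  significant one, so that 1_{n,p} = (s_p(k))_{k < 2^n}. A digit contributes
  (1 - s_p(i) s_p(j)) / 2 to the distance of b_{n,i} and b_{n,j}, and s_n = 1 on [0, 2^n); hence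
  D_n = (n/2) 1_{n,n} 1_{n,n}^T - (1/2) \<Sum>_{p<n} 1_{n,p} 1_{n,p}^T.
  The vectors 1_{n,p}, p \<le> n, are pairwise orthogonal with squared norm 2^n (flipping the lower
  of two distinct digits is a sign-reversing involution), so this is a spectral decomposition of D_n
  with the nonzero eigenvalues n 2^(n-1) and -2^(n-1). Hence the range of D_n is V_n and its
  kernel is the orthogonal complement of V_n, which is also the kernel of A_n since the rows of
  A_n are the 1_{n,p}.\<close>

context vec_space
begin

lemma lincomb_vec_in_span:
  assumes "finite P" "v ` P \<subseteq> carrier_vec n"
  shows "vec n (\<lambda>i. \<Sum>p\<in>P. g p * v p $ i) \<in> span (v ` P)"
  using assms
proof (induction P rule: finite_induct)
  case empty
  have "vec n (\<lambda>i. \<Sum>p\<in>{}. g p * v p $ i) = 0\<^sub>v n" by auto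
  then show ?case using span_zero by simp
next
  case (insert q P)
  have S: "v ` insert q P \<subseteq> carrier_vec n" using insert.prems .
  have "vec n (\<lambda>i. \<Sum>p\<in>P. g p * v p $ i) \<in> span (v ` insert q P)"
    using insert span_is_monotone[of "v ` P" "v ` insert q P"] by auto
  moreover have "g q \<cdot>\<^sub>v v q \<in> span (v ` insert q P)"
    using S by (intro smult_in_span span_mem) auto
  moreover have "vec n (\<lambda>i. \<Sum>p\<in>insert q P. g p * v p $ i)
      = vec n (\<lambda>i. \<Sum>p\<in>P. g p * v p $ i) + g q \<cdot>\<^sub>v v q"
    using insert S by (intro eq_vecI) auto
  ultimately show ?case using span_add1[OF S] by simp
qed

lemma col_space_eq_span:
  assumes M: "M \<in> carrier_mat n n" and S: "S \<subseteq> carrier_vec n"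
    and range_in_span: "\<And>x. x \<in> carrier_vec n \<Longrightarrow> M *\<^sub>v x \<in> span S"
    and in_range: "\<And>s. s \<in> S \<Longrightarrow> \<exists>x\<in>carrier_vec n. M *\<^sub>v x = s"
  shows "col_space M = span S"
proof
  show "col_space M \<subseteq> span S"
    using col_space_eq[OF M] M range_in_span by auto
  have "S \<subseteq> col_space M"
    using col_space_eq[OF M] M S in_range by auto
  then show "span S \<subseteq> col_space M"
    unfolding col_space_def using M by (intro span_subsetI) (auto simp: cols_def)
qed

end

definition alt_sign :: "nat \<Rightarrow> nat \<Rightarrow> real" where
  "alt_sign p k = (if bit k p then -1 else 1)"

definition hdist_weight :: "nat \<Rightarrow> nat \<Rightarrow> real" where
  "hdist_weight n p = (if p = n then real n / 2 else - 1 / 2)"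

lemma alt_sign_mult_self [simp]: "alt_sign p k * alt_sign p k = 1"
  by (simp add: alt_sign_def)

lemma alt_sign_eq_1: "k < 2 ^ p \<Longrightarrow> alt_sign p k = 1"
  by (simp add: alt_sign_def bit_nat_def)

lemma alt_sign_flip_bit: "alt_sign q (flip_bit p k) = (if q = p then - alt_sign q k else alt_sign q k)"
  by (auto simp: alt_sign_def bit_flip_bit_iff)

lemma flip_bit_flip_bit_nat [simp]: "flip_bit p (flip_bit p (k::nat)) = k"
  by (rule bit_eqI) (auto simp: bit_flip_bit_iff)

lemma flip_bit_less_power:
  assumes "(k::nat) < 2 ^ n" "p < n"
  shows "flip_bit p k < 2 ^ n"
proof -
  have "take_bit n (flip_bit p k) = flip_bit p k"
    using assms by (simp add: take_bit_flip_bit_eq take_bit_nat_eq_self)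
  then show ?thesis by (simp add: take_bit_nat_eq_self_iff[symmetric])
qed

lemma sum_alt_sign_mult_eq_0:
  assumes "p < n" "p \<noteq> q"
  shows "(\<Sum>k<2^n. alt_sign p k * alt_sign q k) = 0"
proof -
  have "(\<Sum>k<2^n. alt_sign p k * alt_sign q k)
      = (\<Sum>k<2^n. alt_sign p (flip_bit p k) * alt_sign q (flip_bit p k))"
    by (rule sum.reindex_bij_witness[of _ "flip_bit p" "flip_bit p"])
       (auto simp: flip_bit_less_power assms(1))
  also have "\<dots> = - (\<Sum>k<2^n. alt_sign p k * alt_sign q k)"
    using assms by (simp add: alt_sign_flip_bit sum_negf[symmetric])
  finally show ?thesis by simp
qed

lemma sum_alt_sign_mult:
  assumes "p \<le> n" "q \<le> n"
  shows "(\<Sum>k<2^n. alt_sign p k * alt_sign q k) = (if p = q then 2 ^ n else 0)"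
proof (cases "p < q")
  case True
  then show ?thesis using sum_alt_sign_mult_eq_0[of p n q] assms by simp
next
  case False
  then show ?thesis
    using sum_alt_sign_mult_eq_0[of q n p] assms by (auto simp: mult.commute)
qed

lemma hdist_eq_sum_bit_neq: "hdist n i j = (\<Sum>m<n. if bit i m = bit j m then 0 else 1)"
proof -
  have "hdist n i j = (\<Sum>k<n. if bit i (n - 1 - k) = bit j (n - 1 - k) then 0 else 1)"
    unfolding hdist_def bdigit_def bit_nat_def
    by (intro sum.cong refl) (auto simp: mod2_eq_if)
  also have "\<dots> = (\<Sum>m<n. if bit i m = bit j m then 0 else 1)"
    by (rule sum.reindex_bij_witness[of _ "\<lambda>m. n - 1 - m" "\<lambda>m. n - 1 - m"]) auto
  finally show ?thesis .
qed

lemma hdist_eq_sum_alt_sign: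
  assumes "i < 2 ^ n" "j < 2 ^ n"
  shows "hdist n i j = (\<Sum>p\<le>n. hdist_weight n p * alt_sign p i * alt_sign p j)"
proof -
  have "hdist n i j = (\<Sum>m<n. (1 - alt_sign m i * alt_sign m j) / 2)"
    unfolding hdist_eq_sum_bit_neq by (intro sum.cong refl) (simp add: alt_sign_def)
  also have "\<dots> = real n / 2 + (\<Sum>m<n. hdist_weight n m * alt_sign m i * alt_sign m j)"
    by (simp add: hdist_weight_def sum_divide_distrib[symmetric] sum_subtractf
        diff_divide_distrib sum_negf)
  also have "\<dots> = (\<Sum>p\<le>n. hdist_weight n p * alt_sign p i * alt_sign p j)"
    using assms by (simp add: lessThan_Suc_atMost[symmetric] alt_sign_eq_1 hdist_weight_def)
  finally show ?thesis .
qed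

lemma hdist_Suc:
  assumes "i < 2 ^ Suc n" "j < 2 ^ Suc n"
  shows "hdist (Suc n) i j
    = hdist n (i mod 2 ^ n) (j mod 2 ^ n) + (if (i < 2 ^ n) = (j < 2 ^ n) then 0 else 1)"
proof -
  have low: "bit (k mod 2 ^ n) m = bit k m" if "m < n" for k m :: nat
    using that by (simp flip: take_bit_eq_mod add: bit_take_bit_iff)
  have top: "bit k n = (\<not> k < 2 ^ n)" if "k < 2 ^ Suc n" for k :: nat
  proof -
    have "k div 2 ^ n < 2" using that by (simp add: div_less_iff_less_mult)
    then show ?thesis by (auto simp: bit_nat_def less_2_cases_iff div_eq_0_iff)
  qed
  show ?thesis
    using assms by (simp add: hdist_eq_sum_bit_neq low top)
qed

lemma altvec_index [simp]: "k < 2 ^ n \<Longrightarrow> altvec n p $ k = alt_sign p k"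
  by (simp add: altvec_def alt_sign_def bit_nat_def)

lemma altvec_dim [simp]: "dim_vec (altvec n p) = 2 ^ n"
  unfolding altvec_def by (rule dim_vec)

lemma altvec_carrier [simp]: "altvec n p \<in> carrier_vec (2 ^ n)"
  by (rule carrier_vecI) (rule altvec_dim)

lemma altvec_scalar_prod:
  "x \<in> carrier_vec (2 ^ n) \<Longrightarrow> altvec n p \<bullet> x = (\<Sum>k<2^n. alt_sign p k * x $ k)"
  by (simp add: scalar_prod_def atLeast0LessThan)

lemma altvec_scalar_prod_altvec:
  "p \<le> n \<Longrightarrow> q \<le> n \<Longrightarrow> altvec n p \<bullet> altvec n q = (if p = q then 2 ^ n else 0)"
  by (simp add: altvec_scalar_prod sum_alt_sign_mult)

lemma altvec_scalar_prod_lincomb: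
  assumes "q \<le> n"
  shows "altvec n q \<bullet> vec (2 ^ n) (\<lambda>k. \<Sum>p\<le>n. f p * alt_sign p k) = 2 ^ n * f q"
proof -
  have "altvec n q \<bullet> vec (2 ^ n) (\<lambda>k. \<Sum>p\<le>n. f p * alt_sign p k)
      = (\<Sum>k<2^n. \<Sum>p\<le>n. f p * (alt_sign q k * alt_sign p k))"
    by (simp add: altvec_scalar_prod sum_distrib_left mult.left_commute)
  also have "\<dots> = (\<Sum>p\<le>n. f p * (\<Sum>k<2^n. alt_sign q k * alt_sign p k))"
    by (subst sum.swap) (simp add: sum_distrib_left)
  also have "\<dots> = (\<Sum>p\<le>n. if p = q then 2 ^ n * f q else 0)"
    using assms by (intro sum.cong refl) (auto simp: sum_alt_sign_mult)
  also have "\<dots> = 2 ^ n * f q"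
    using assms by simp
  finally show ?thesis .
qed

lemma Dmat_carrier [simp]: "Dmat n \<in> carrier_mat (2 ^ n) (2 ^ n)"
  unfolding Dmat_def by (rule mat_carrier)

lemma Dmat_dim [simp]: "dim_row (Dmat n) = 2 ^ n" "dim_col (Dmat n) = 2 ^ n"
  using carrier_matD[OF Dmat_carrier] by blast+

lemma Dmat_index: "i < 2 ^ n \<Longrightarrow> j < 2 ^ n \<Longrightarrow> Dmat n $$ (i, j) = hdist n i j"
  by (simp add: Dmat_def)

lemma Dmat_one: "Dmat 1 = mat_of_rows_list 2 [[0, 1], [1, 0]]"
proof (rule eq_matI)
  fix i j assume "i < dim_row (mat_of_rows_list 2 [[0::real, 1], [1, 0]])"
    "j < dim_col (mat_of_rows_list 2 [[0::real, 1], [1, 0]])"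
  then have "i < 2" "j < 2" by (simp_all add: mat_of_rows_list_def)
  then have "i \<in> {0, 1}" "j \<in> {0, 1}" by auto
  then show "Dmat 1 $$ (i, j) = mat_of_rows_list 2 [[0, 1], [1, 0]] $$ (i, j)"
    by (auto simp: Dmat_index mat_of_rows_list_def hdist_def bdigit_def)
qed (simp_all add: mat_of_rows_list_def Dmat_def)

lemma Dmat_Suc:
  "Dmat (Suc n) = four_block_mat (Dmat n) (Dmat n + Omat n) (Dmat n + Omat n) (Dmat n)"
proof (rule eq_matI)
  fix i j
  assume "i < dim_row (four_block_mat (Dmat n) (Dmat n + Omat n) (Dmat n + Omat n) (Dmat n))"
    "j < dim_col (four_block_mat (Dmat n) (Dmat n + Omat n) (Dmat n + Omat n) (Dmat n))"
  then have i: "i < 2 ^ Suc n" and j: "j < 2 ^ Suc n" by (simp_all add: Dmat_def)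
  have mod_eq: "k mod 2 ^ n = k - 2 ^ n" if "\<not> k < 2 ^ n" "k < 2 ^ Suc n" for k :: nat
    using that by (simp add: le_mod_geq)
  show "Dmat (Suc n) $$ (i, j)
      = four_block_mat (Dmat n) (Dmat n + Omat n) (Dmat n + Omat n) (Dmat n) $$ (i, j)"
    using i j by (simp add: Dmat_index hdist_Suc Dmat_def Omat_def mod_eq)
qed (simp_all add: Dmat_def)

lemma Dmat_mult_vec:
  assumes x: "x \<in> carrier_vec (2 ^ n)"
  shows "Dmat n *\<^sub>v x
    = vec (2 ^ n) (\<lambda>i. \<Sum>p\<le>n. (hdist_weight n p * (altvec n p \<bullet> x)) * alt_sign p i)"
proof (rule eq_vecI)
  fix i assume "i < dim_vec (vec (2 ^ n)
    (\<lambda>i. \<Sum>p\<le>n. (hdist_weight n p * (altvec n p \<bullet> x)) * alt_sign p i))"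
  then have i: "i < 2 ^ n" by simp
  have "(Dmat n *\<^sub>v x) $ i = (\<Sum>j<2^n. row (Dmat n) i $ j * x $ j)"
    using i x by (simp add: scalar_prod_def atLeast0LessThan)
  also have "\<dots> = (\<Sum>j<2^n. hdist n i j * x $ j)"
    using i by (intro sum.cong refl) (simp add: Dmat_index)
  also have "\<dots> = (\<Sum>j<2^n. \<Sum>p\<le>n. hdist_weight n p * alt_sign p i * (alt_sign p j * x $ j))"
    using i by (simp add: hdist_eq_sum_alt_sign sum_distrib_right mult.assoc)
  also have "\<dots> = (\<Sum>p\<le>n. (hdist_weight n p * (altvec n p \<bullet> x)) * alt_sign p i)"
    by (subst sum.swap) (simp add: sum_distrib_left altvec_scalar_prod[OF x] mult_ac)
  finally show "(Dmat n *\<^sub>v x) $ i = vec (2 ^ n)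
    (\<lambda>i. \<Sum>p\<le>n. (hdist_weight n p * (altvec n p \<bullet> x)) * alt_sign p i) $ i"
    using i by simp
qed simp

lemma Dmat_mult_altvec:
  assumes "q \<le> n"
  shows "Dmat n *\<^sub>v altvec n q = (2 ^ n * hdist_weight n q) \<cdot>\<^sub>v altvec n q"
proof -
  have "(\<Sum>p\<le>n. hdist_weight n p * (altvec n p \<bullet> altvec n q) * alt_sign p i)
      = (\<Sum>p\<le>n. if p = q then 2 ^ n * hdist_weight n q * alt_sign q i else 0)" for i
    using assms by (intro sum.cong refl) (auto simp: altvec_scalar_prod_altvec)
  then show ?thesis
    using assms by (intro eq_vecI) (simp_all add: Dmat_mult_vec)
qed

lemma hdist_weight_neq_0: "1 \<le> n \<Longrightarrow> hdist_weight n p \<noteq> 0"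
  by (simp add: hdist_weight_def)

lemma Vspace_eq_span:
  "Vspace n = LinearCombinations.module.span class_ring (module_vec TYPE(real) (2 ^ n)) (altvec n ` {..n})"
  by (simp add: Vspace_def atMost_atLeast0)

lemma col_space_Dmat:
  assumes "1 \<le> n"
  shows "vec_space.col_space (2 ^ n) (Dmat n) = Vspace n"
proof -
  interpret V: vec_space "TYPE(real)" "2 ^ n" .
  have "Dmat n *\<^sub>v x \<in> V.span (altvec n ` {..n})" if x: "x \<in> carrier_vec (2 ^ n)" for x
  proof -
    have "Dmat n *\<^sub>v x
        = vec (2 ^ n) (\<lambda>i. \<Sum>p\<le>n. (hdist_weight n p * (altvec n p \<bullet> x)) * altvec n p $ i)"
      unfolding Dmat_mult_vec[OF x] by (intro eq_vecI) simp_all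
    then show ?thesis by (simp add: V.lincomb_vec_in_span image_subset_iff)
  qed
  moreover have "\<exists>x\<in>carrier_vec (2 ^ n). Dmat n *\<^sub>v x = altvec n q" if "q \<le> n" for q
  proof
    define c where "c = 2 ^ n * hdist_weight n q"
    have "c \<noteq> 0" using hdist_weight_neq_0[OF assms] by (simp add: c_def)
    have "Dmat n *\<^sub>v (inverse c \<cdot>\<^sub>v altvec n q) = inverse c \<cdot>\<^sub>v (Dmat n *\<^sub>v altvec n q)"
      by (rule mult_mat_vec[OF Dmat_carrier altvec_carrier])
    also have "\<dots> = altvec n q"
      unfolding Dmat_mult_altvec[OF that] c_def[symmetric] using \<open>c \<noteq> 0\<close>
      by (simp add: smult_smult_assoc)
    finally show "Dmat n *\<^sub>v (inverse c \<cdot>\<^sub>v altvec n q) = altvec n q" .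
  qed simp
  ultimately show ?thesis
    unfolding Vspace_eq_span by (intro V.col_space_eq_span) auto
qed

lemma orthogonal_complement_Vspace:
  "vec_module.orthogonal_complement (2 ^ n) (Vspace n)
    = {x \<in> carrier_vec (2 ^ n). \<forall>p\<le>n. altvec n p \<bullet> x = 0}"
proof -
  interpret V: vec_space "TYPE(real)" "2 ^ n" .
  have "V.orthogonal_complement (Vspace n) = V.orthogonal_complement (altvec n ` {..n})"
    unfolding Vspace_eq_span by (rule V.in_orthogonal_complement_span) auto
  then show ?thesis
    by (auto simp: V.orthogonal_complement_def comm_scalar_prod[of _ "2 ^ n"])
qed

lemma mat_kernel_Dmat:
  assumes "1 \<le> n"
  shows "mat_kernel (Dmat n) = {x \<in> carrier_vec (2 ^ n). \<forall>p\<le>n. altvec n p \<bullet> x = 0}"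
proof (intro Set.set_eqI iffI)
  fix x assume "x \<in> mat_kernel (Dmat n)"
  then have x: "x \<in> carrier_vec (2 ^ n)" and Dx: "Dmat n *\<^sub>v x = 0\<^sub>v (2 ^ n)"
    by (auto simp: mat_kernel_def)
  have "hdist_weight n q * (altvec n q \<bullet> x) = 0" if "q \<le> n" for q
  proof -
    have "2 ^ n * (hdist_weight n q * (altvec n q \<bullet> x)) = altvec n q \<bullet> (Dmat n *\<^sub>v x)"
      unfolding Dmat_mult_vec[OF x] by (rule altvec_scalar_prod_lincomb[OF that, symmetric])
    then show ?thesis using Dx by simp
  qed
  then show "x \<in> {x \<in> carrier_vec (2 ^ n). \<forall>p\<le>n. altvec n p \<bullet> x = 0}"
    using x hdist_weight_neq_0[OF assms] by auto
next
  fix x assume "x \<in> {x \<in> carrier_vec (2 ^ n). \<forall>p\<le>n. altvec n p \<bullet> x = 0}"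
  then show "x \<in> mat_kernel (Dmat n)"
    by (auto simp: mat_kernel_def Dmat_mult_vec)
qed

lemma Amat_dim [simp]: "dim_row (Amat n) = Suc n" "dim_col (Amat n) = 2 ^ n"
  by (simp_all add: Amat_def)

lemma row_Amat: "r < Suc n \<Longrightarrow> row (Amat n) r = altvec n (n - r)"
  by (intro eq_vecI) (simp_all add: Amat_def)

lemma mat_kernel_Amat:
  "mat_kernel (Amat n) = {x \<in> carrier_vec (2 ^ n). \<forall>p\<le>n. altvec n p \<bullet> x = 0}"
proof (intro Set.set_eqI iffI)
  fix x assume "x \<in> mat_kernel (Amat n)"
  then have x: "x \<in> carrier_vec (2 ^ n)" and Ax: "Amat n *\<^sub>v x = 0\<^sub>v (Suc n)"
    by (auto simp: mat_kernel_def)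
  have "altvec n p \<bullet> x = 0" if "p \<le> n" for p
  proof -
    have "(Amat n *\<^sub>v x) $ (n - p) = 0" using Ax by simp
    then show ?thesis using that by (simp add: row_Amat)
  qed
  then show "x \<in> {x \<in> carrier_vec (2 ^ n). \<forall>p\<le>n. altvec n p \<bullet> x = 0}"
    using x by simp
next
  fix x assume "x \<in> {x \<in> carrier_vec (2 ^ n). \<forall>p\<le>n. altvec n p \<bullet> x = 0}"
  then show "x \<in> mat_kernel (Amat n)"
    by (auto simp: mat_kernel_def row_Amat)
qed

theorem lemma4p1:
  fixes n :: nat
  assumes "n \<ge> 1"
  shows "Dmat 1 = mat_of_rows_list 2 [[0, 1], [1, 0]]
    \<and> Dmat (n + 1) = four_block_mat (Dmat n) (Dmat n + Omat n) (Dmat n + Omat n) (Dmat n)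
    \<and> Dmat n *\<^sub>v altvec n n = (real n * 2 ^ (n - 1)) \<cdot>\<^sub>v altvec n n
    \<and> (\<forall>i < n. Dmat n *\<^sub>v altvec n i = (- (2 ^ (n - 1))) \<cdot>\<^sub>v altvec n i)
    \<and> vec_space.col_space (2 ^ n) (Dmat n) = Vspace n
    \<and> mat_kernel (Amat n) = mat_kernel (Dmat n)
    \<and> mat_kernel (Dmat n) = vec_module.orthogonal_complement (2 ^ n) (Vspace n)"
proof -
  obtain m where n: "n = Suc m" using assms by (cases n) auto
  have "2 ^ n * hdist_weight n p = (if p = n then real n * 2 ^ (n - 1) else - (2 ^ (n - 1)))"
    for p unfolding n by (simp add: hdist_weight_def)
  then show ?thesis
    using Dmat_one Dmat_Suc[of n] Dmat_mult_altvec[of _ n] col_space_Dmat[OF assms]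
      mat_kernel_Amat mat_kernel_Dmat[OF assms] orthogonal_complement_Vspace
    by simp
qed

end
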